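(* $\lim_{n\to\infty}h(n)=1/\pi$.
   Context: A standardized Laplacian matrix of order $n$ is a real $n\times n$ matrix whose row sums are all $0$ and whose off-diagonal entries are nonpositive with absolute value at most $1/n$. For $n\ge2$, $h(n)$ is the supremum of $\operatorname{Im}\lambda$ over all eigenvalues $\lambda$ of all standardized Laplacian matrices of order $n$. *)

theory Defs
  imports Complex_Main "Jordan_Normal_Form.Char_Poly"
begin

definition standardized_laplacian :: "nat \<Rightarrow> real mat \<Rightarrow> bool" where
  "standardized_laplacian n A \<longleftrightarrow>
     A \<in> carrier_mat n n \<and>
     (\<forall>i<n. (\<Sum>j<n. A $$ (i, j)) = 0) \<and>
     (\<forall>i<n. \<forall>j<n. i \<noteq> j \<longrightarrow> A $$ (i, j) \<le> 0 \<and> \<bar>A $$ (i, j)\<bar> \<le> 1 / real n)"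

definition h :: "nat \<Rightarrow> real" where
  "h n = Sup {Im k | k A. standardized_laplacian n A \<and> eigenvalue (map_mat complex_of_real A) k}"

end

theory Submission
  imports Defs "HOL-Analysis.Analysis" "HOL-Real_Asymp.Real_Asymp"
begin

(*
  We show  cot(pi/n)/n <= h n <= 1/pi  for n >= 3; the theorem then follows by sandwiching,
  since cot(pi/n)/n -> 1/pi.

  If A v = k v with A a standardized Laplacian, then
    Im k * |v|^2 = sum_{i,j} A_ij Im(conj v_i v_j),
  and since A_ij lies in [-1/n, 0] off the diagonal and Im(conj v_i v_j) is antisymmetric, this is
  at most (1/2n) sum_{i,j} |Im(conj v_i v_j)|.  The heart
  of the proof is the inequality
    sum_{i,j} |Im(conj z_i z_j)| <= (2/pi) (sum_i |z_i|)^2,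
  i.e. sum w_i w_j |sin(x_i - x_j)| <= (2/pi) W^2 for weights w_i >= 0 of total mass W.  Writing
    |sin t| = 1 - 2 int_0^{pi/2} max 0 (a - pidist t) (sin a / 2) da,
  it suffices to bound, for each width a, the weighted pairwise overlaps of arcs of length a on the
  circle R/(pi Z) from below by a^2 W^2/pi.  This holds up to an error O(1/K): unroll the circle K
  times onto a line, where the bound is an L^2 estimate for the coverage function of the intervals.
  Cauchy-Schwarz then gives Im k * |v|^2 <= (1/2n) (2/pi) n |v|^2.

  The circulant matrix with first row  (k/n, -1/n, ..., -1/n, 0, ..., 0),
  k = (n-1) div 2, is a standardized Laplacian; a Fourier vector is an eigenvector, and its
  eigenvalue has imaginary part  (1/n) sum_{m=1..k} sin(2 pi m/n) >= cot(pi/n)/n.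
*)

text \<open>Vectors are indexed with the matrix library's \<open>$\<close>, not that of \<open>real^'n\<close>.\<close>
unbundle no vec_syntax

section \<open>An overlap estimate on the line\<close>

lemma indicator_Icc_overlap:
  fixes p q a t :: real
  shows "indicator {p - a..p} t * indicator {q - a..q} t
       = (indicator {max (p - a) (q - a)..min p q} t :: real)"
  by (auto simp: indicator_def)

lemma integrable_indicator_Icc: "integrable lborel (indicator {u..v} :: real \<Rightarrow> real)"
  by (auto simp: emeasure_lborel_Icc_eq)

lemma overlap_integrable:
  "integrable lborel (\<lambda>t::real. indicator {p - a..p} t * indicator {q - a..q} t :: real)"
  unfolding indicator_Icc_overlap by (rule integrable_indicator_Icc)

lemma overlap_integral:
  assumes "0 \<le> a"
  shows "integral\<^sup>L lborel (\<lambda>t::real. indicator {p - a..p} t * indicator {q - a..q} t :: real)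
       = max 0 (a - \<bar>p - q\<bar>)"
  using assms unfolding indicator_Icc_overlap by (auto simp: max_def min_def)

text \<open>For points \<open>y s \<in> [L0, L1]\<close> with weights \<open>w s\<close> let
  \<open>N = \<Sum>s. w s * indicator {y s - a..y s}\<close> be the weighted coverage function.  Then \<open>\<integral>N\<^sup>2\<close>
  is the weighted sum of pairwise overlaps, while \<open>N\<^sup>2 \<ge> 2cN - c\<^sup>2\<close> on the support
  \<open>[L0 - a, L1]\<close> of \<open>N\<close>; integration gives the bound for every constant \<open>c\<close>.\<close>
lemma line_overlap_energy:
  fixes w y :: "'s \<Rightarrow> real"
  assumes S: "finite S" and y: "\<And>s. s \<in> S \<Longrightarrow> L0 \<le> y s \<and> y s \<le> L1"
    and a: "0 \<le> a" and L: "L0 \<le> L1"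
  shows "2 * c * a * (\<Sum>s\<in>S. w s) - c\<^sup>2 * (L1 - L0 + a)
       \<le> (\<Sum>s\<in>S. \<Sum>s'\<in>S. w s * w s' * max 0 (a - \<bar>y s - y s'\<bar>))"
proof -
  define N where "N t = (\<Sum>s\<in>S. w s * indicator {y s - a..y s} t)" for t :: real
  define S0 where "S0 = {L0 - a..L1}"
  have N_sq: "N t * N t = (\<Sum>s\<in>S. \<Sum>s'\<in>S. w s * w s' *
                (indicator {y s - a..y s} t * indicator {y s' - a..y s'} t))" for t
    unfolding N_def by (simp add: sum_distrib_left sum_distrib_right mult_ac)
  have int_N: "integrable lborel N"
    unfolding N_def by (auto intro!: integrable_indicator_Icc)
  have int_N_sq: "integrable lborel (\<lambda>t. N t * N t)"
    unfolding N_sq by (simp add: integrable_sum overlap_integrable)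
  have int_S0: "integrable lborel (indicator S0 :: real \<Rightarrow> real)"
    unfolding S0_def by (rule integrable_indicator_Icc)
  have energy: "integral\<^sup>L lborel (\<lambda>t. N t * N t)
              = (\<Sum>s\<in>S. \<Sum>s'\<in>S. w s * w s' * max 0 (a - \<bar>y s - y s'\<bar>))"
    unfolding N_sq
    by (simp add: integral_sum integrable_sum overlap_integrable
                  overlap_integral[OF a])
  have mass: "integral\<^sup>L lborel N = a * (\<Sum>s\<in>S. w s)"
    unfolding N_def using a
    by (simp add: integral_sum integrable_indicator_Icc
                  sum_distrib_left mult_ac)
  have support: "integral\<^sup>L lborel (indicator S0 :: real \<Rightarrow> real) = L1 - L0 + a"
    using a L by (simp add: S0_def)
  have N_vanishes: "N t = 0" if "t \<notin> S0" for t
  proof -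
    have "indicator {y s - a..y s} t = (0::real)" if "s \<in> S" for s
      using y[OF that] \<open>t \<notin> S0\<close> unfolding S0_def by (auto simp: indicator_def)
    then show ?thesis unfolding N_def by simp
  qed
  have pointwise: "2 * c * N t - c\<^sup>2 * indicator S0 t \<le> N t * N t" for t
  proof (cases "t \<in> S0")
    case True
    have "0 \<le> (N t - c)\<^sup>2" by simp
    then show ?thesis using True by (simp add: power2_eq_square algebra_simps)
  qed (simp add: N_vanishes)
  have "integral\<^sup>L lborel (\<lambda>t. 2 * c * N t - c\<^sup>2 * indicator S0 t)
      \<le> integral\<^sup>L lborel (\<lambda>t. N t * N t)"
    by (rule integral_mono) (use int_N int_S0 int_N_sq pointwise in auto)
  then show ?thesis
    using int_N int_S0 mass support energy by (simp add: mult_ac)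
qed

section \<open>Overlaps of arcs on the circle \<open>\<real>/\<pi>\<int>\<close>\<close>

text \<open>For \<open>\<bar>t\<bar> < \<pi>\<close>, the distance from \<open>t\<close> to the nearest multiple of \<open>\<pi>\<close>.\<close>
definition pidist :: "real \<Rightarrow> real" where
  "pidist t = min \<bar>t\<bar> (pi - \<bar>t\<bar>)"

lemma pidist_le_translate:
  fixes m :: int
  assumes "\<bar>t\<bar> < pi"
  shows "pidist t \<le> \<bar>t + m * pi\<bar>"
proof (cases "m = 0")
  case False
  then have "pi \<le> \<bar>m * pi\<bar>" by (simp add: abs_mult)
  then show ?thesis by (simp add: pidist_def)
qed (simp add: pidist_def)

lemma pidist_bounds: "\<bar>t\<bar> < pi \<Longrightarrow> 0 \<le> pidist t \<and> pidist t \<le> pi / 2"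
  unfolding pidist_def by (auto simp: min_def)

lemma sin_pidist:
  assumes "\<bar>t\<bar> < pi"
  shows "sin (pidist t) = \<bar>sin t\<bar>"
proof -
  have "sin \<bar>t\<bar> = \<bar>sin t\<bar>"
  proof (cases "t \<ge> 0")
    case True
    then show ?thesis using assms sin_ge_zero[of t] by simp
  next
    case False
    then show ?thesis using assms sin_ge_zero[of "- t"] by simp
  qed
  then show ?thesis unfolding pidist_def by (simp add: min_def)
qed

text \<open>A ramp of width \<open>a \<le> \<pi>/2\<close> is positive on at most one of the translates \<open>D + m\<pi>\<close>, and
  there its value is bounded by the value at the nearest translate.\<close>
lemma translates_ramp_sum_le:
  assumes D: "\<bar>D\<bar> < pi" and a: "0 \<le> a" "a \<le> pi / 2"
  shows "(\<Sum>l<K. max 0 (a - \<bar>D + (real k - real l) * pi\<bar>)) \<le> max 0 (a - pidist D)"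
proof -
  define g where "g l = max 0 (a - \<bar>D + (real k - real l) * pi\<bar>)" for l :: nat
  define P where "P = {l \<in> {..<K}. g l \<noteq> 0}"
  have g_le: "g l \<le> max 0 (a - pidist D)" for l
    using pidist_le_translate[OF D, of "int k - int l"] by (simp add: g_def)
  have P_unique: "l1 = l2" if "l1 \<in> P" "l2 \<in> P" for l1 l2
  proof -
    have "\<bar>D + (real k - real l1) * pi\<bar> < pi / 2" "\<bar>D + (real k - real l2) * pi\<bar> < pi / 2"
      using that a by (auto simp: P_def g_def max_def split: if_splits)
    moreover have "\<bar>(real l1 - real l2) * pi\<bar>
        \<le> \<bar>D + (real k - real l2) * pi\<bar> + \<bar>D + (real k - real l1) * pi\<bar>"
    proof -
      have "(real l1 - real l2) * pi = (D + (real k - real l2) * pi) - (D + (real k - real l1) * pi)"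
        by (simp add: algebra_simps)
      then show ?thesis by (simp only: abs_triangle_ineq4)
    qed
    ultimately have "\<bar>(real l1 - real l2) * pi\<bar> < pi" by linarith
    then have "\<bar>real l1 - real l2\<bar> < 1" by (simp add: abs_mult)
    then show ?thesis by linarith
  qed
  have "(\<Sum>l<K. g l) = (\<Sum>l\<in>P. g l)"
    by (rule sum.mono_neutral_right) (auto simp: P_def)
  also have "\<dots> \<le> max 0 (a - pidist D)"
  proof (cases "P = {}")
    case False
    then obtain l0 where "l0 \<in> P" by auto
    then have "P = {l0}" using P_unique by auto
    then show ?thesis using g_le by simp
  qed simp
  finally show ?thesis by (simp add: g_def)
qed

text \<open>Unrolling the circle \<open>K\<close> times onto the line: lifting each point \<open>x i \<in> [0, \<pi>)\<close> to
  \<open>x i + k\<pi>\<close> for \<open>k < K\<close> yields at most \<open>K\<close> times the overlaps measured on the circle.\<close>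
lemma unrolled_overlaps_le:
  fixes w x :: "'i \<Rightarrow> real"
  assumes w: "\<And>i. i \<in> I \<Longrightarrow> 0 \<le> w i" and x: "\<And>i. i \<in> I \<Longrightarrow> 0 \<le> x i \<and> x i < pi"
    and a: "0 \<le> a" "a \<le> pi / 2"
  shows "(\<Sum>i\<in>I. \<Sum>k<K. \<Sum>j\<in>I. \<Sum>l<K.
            w i * w j * max 0 (a - \<bar>(x i + real k * pi) - (x j + real l * pi)\<bar>))
       \<le> real K * (\<Sum>i\<in>I. \<Sum>j\<in>I. w i * w j * max 0 (a - pidist (x i - x j)))"
proof -
  have lift_le: "(\<Sum>j\<in>I. \<Sum>l<K. w i * w j * max 0 (a - \<bar>(x i + real k * pi) - (x j + real l * pi)\<bar>))
      \<le> (\<Sum>j\<in>I. w i * w j * max 0 (a - pidist (x i - x j)))" (is "?lifted i k \<le> ?circle i")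
    if i: "i \<in> I" for i k
  proof (rule sum_mono)
    fix j assume j: "j \<in> I"
    have "\<bar>x i - x j\<bar> < pi" using x[OF i] x[OF j] by linarith
    from translates_ramp_sum_le[OF this a, where K = K and k = k]
    have "(\<Sum>l<K. max 0 (a - \<bar>(x i + real k * pi) - (x j + real l * pi)\<bar>))
        \<le> max 0 (a - pidist (x i - x j))"
      by (simp add: algebra_simps)
    then show "(\<Sum>l<K. w i * w j * max 0 (a - \<bar>(x i + real k * pi) - (x j + real l * pi)\<bar>))
        \<le> w i * w j * max 0 (a - pidist (x i - x j))"
      using w[OF i] w[OF j] by (simp add: sum_distrib_left[symmetric] mult_left_mono)
  qed
  have "(\<Sum>i\<in>I. \<Sum>k<K. ?lifted i k) \<le> (\<Sum>i\<in>I. \<Sum>k<K. ?circle i)"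
    by (rule sum_mono, rule sum_mono, rule lift_le)
  then show ?thesis
    by (simp add: sum_distrib_left)
qed

text \<open>Apply the energy inequality to the \<open>K\<close>-fold unrolling
  with the optimal constant \<open>c = a W / \<pi>\<close>.\<close>
lemma circle_overlap_lower_bound:
  fixes w x :: "'i \<Rightarrow> real"
  assumes I: "finite I" and w: "\<And>i. i \<in> I \<Longrightarrow> 0 \<le> w i"
    and x: "\<And>i. i \<in> I \<Longrightarrow> 0 \<le> x i \<and> x i < pi"
    and a: "0 \<le> a" "a \<le> pi / 2" and K: "1 \<le> K"
  shows "a\<^sup>2 * (\<Sum>i\<in>I. w i)\<^sup>2 / pi - (\<Sum>i\<in>I. w i)\<^sup>2 * pi / (8 * real K)
       \<le> (\<Sum>i\<in>I. \<Sum>j\<in>I. w i * w j * max 0 (a - pidist (x i - x j)))"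
proof -
  define W where "W = (\<Sum>i\<in>I. w i)"
  define G where "G = (\<Sum>i\<in>I. \<Sum>j\<in>I. w i * w j * max 0 (a - pidist (x i - x j)))"
  define y where "y s = x (fst s) + real (snd s) * pi" for s :: "'i \<times> nat"
  define c where "c = a * W / pi"
  have y_range: "0 \<le> y s \<and> y s \<le> real K * pi" if "s \<in> I \<times> {..<K}" for s
  proof -
    have "real (snd s) + 1 \<le> real K" using that by auto
    then have "(real (snd s) + 1) * pi \<le> real K * pi" by (rule mult_right_mono) simp
    then have "real (snd s) * pi + pi \<le> real K * pi" by (simp add: algebra_simps)
    moreover have "0 \<le> x (fst s) \<and> x (fst s) < pi" using x that by auto
    ultimately show ?thesis by (simp add: y_def)
  qed
  have "2 * c * a * (\<Sum>s\<in>I \<times> {..<K}. w (fst s)) - c\<^sup>2 * (real K * pi - 0 + a)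
      \<le> (\<Sum>s\<in>I \<times> {..<K}. \<Sum>s'\<in>I \<times> {..<K}. w (fst s) * w (fst s') * max 0 (a - \<bar>y s - y s'\<bar>))"
    by (rule line_overlap_energy) (use I y_range a in auto)
  also have "\<dots> = (\<Sum>i\<in>I. \<Sum>k<K. \<Sum>j\<in>I. \<Sum>l<K.
                   w i * w j * max 0 (a - \<bar>(x i + real k * pi) - (x j + real l * pi)\<bar>))"
    by (simp add: sum.cartesian_product' y_def)
  also have "\<dots> \<le> real K * G"
    unfolding G_def by (rule unrolled_overlaps_le) (use w x a in auto)
  finally have "2 * c * a * (real K * W) - c\<^sup>2 * (real K * pi + a) \<le> real K * G"
    by (simp add: sum.cartesian_product' W_def sum_distrib_left)
  moreover have "2 * c * a * (real K * W) - c\<^sup>2 * (real K * pi + a)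
               = real K * (a\<^sup>2 * W\<^sup>2 / pi) - a ^ 3 * W\<^sup>2 / pi\<^sup>2"
    unfolding c_def by (simp add: field_simps power2_eq_square power3_eq_cube)
  moreover have "a ^ 3 * W\<^sup>2 / pi\<^sup>2 \<le> (pi / 2) ^ 3 * W\<^sup>2 / pi\<^sup>2"
    using a by (intro divide_right_mono mult_right_mono power_mono) auto
  moreover have "(pi / 2) ^ 3 * W\<^sup>2 / pi\<^sup>2 = real K * (W\<^sup>2 * pi / (8 * real K))"
    using K by (simp add: power3_eq_cube power2_eq_square field_simps)
  ultimately have "real K * (a\<^sup>2 * W\<^sup>2 / pi - W\<^sup>2 * pi / (8 * real K)) \<le> real K * G"
    by (simp add: right_diff_distrib)
  then show ?thesis
    using K unfolding G_def W_def by simp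
qed

section \<open>The inequality \<open>\<Sum>\<Sum> w\<^sub>i w\<^sub>j \<bar>sin (x\<^sub>i - x\<^sub>j)\<bar> \<le> (2/\<pi>) W\<^sup>2\<close>\<close>

lemma ftc_real:
  fixes F f :: "real \<Rightarrow> real"
  assumes "a \<le> b" and "\<And>x. (F has_real_derivative f x) (at x)"
  shows "(f has_integral (F b - F a)) {a..b}"
  by (rule fundamental_theorem_of_calculus[OF assms(1)])
     (use assms(2) in \<open>auto simp: has_real_derivative_iff_has_vector_derivative[symmetric]
                          intro: has_field_derivative_at_within\<close>)

lemma sin_weight_integral: "((\<lambda>a. sin a / 2) has_integral 1 / 2) {0..pi / 2}"
proof -
  have "((\<lambda>a. sin a / 2) has_integral ((\<lambda>a. - cos a / 2) (pi / 2) - (\<lambda>a. - cos a / 2) 0))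
          {0..pi / 2}"
    by (rule ftc_real) (auto intro!: derivative_eq_intros)
  then show ?thesis by simp
qed

lemma square_sin_weight_integral:
  "((\<lambda>a. a\<^sup>2 * (sin a / 2)) has_integral (pi - 2) / 2) {0..pi / 2}"
proof -
  define F :: "real \<Rightarrow> real" where "F u = (2 * u * sin u + 2 * cos u - u\<^sup>2 * cos u) / 2" for u
  have "((\<lambda>a. a\<^sup>2 * (sin a / 2)) has_integral (F (pi / 2) - F 0)) {0..pi / 2}"
    unfolding F_def
    by (rule ftc_real) (auto intro!: derivative_eq_intros simp: field_simps power2_eq_square)
  moreover have "F (pi / 2) - F 0 = (pi - 2) / 2" by (simp add: F_def field_simps)
  ultimately show ?thesis by simp
qed

lemma ramp_sin_weight_integral:
  assumes d: "0 \<le> d" "d \<le> pi / 2"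
  shows "((\<lambda>a. max 0 (a - d) * (sin a / 2)) has_integral (1 / 2 - sin d / 2)) {0..pi / 2}"
proof -
  define F where "F a = (sin a - (a - d) * cos a) / 2" for a :: real
  have "((\<lambda>a. (a - d) * (sin a / 2)) has_integral (F (pi / 2) - F d)) {d..pi / 2}"
    unfolding F_def by (rule ftc_real) (use d in \<open>auto intro!: derivative_eq_intros\<close>)
  moreover have "F (pi / 2) - F d = 1 / 2 - sin d / 2" by (simp add: F_def)
  ultimately have ramp: "((\<lambda>a. (a - d) * (sin a / 2)) has_integral (1 / 2 - sin d / 2)) {d..pi / 2}"
    by simp
  have right: "((\<lambda>a. max 0 (a - d) * (sin a / 2)) has_integral (1 / 2 - sin d / 2)) {d..pi / 2}"
    by (rule has_integral_eq[OF _ ramp]) auto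
  have left: "((\<lambda>a. max 0 (a - d) * (sin a / 2)) has_integral 0) {0..d}"
    by (rule has_integral_eq[where f = "\<lambda>_. 0"]) auto
  show ?thesis
    using has_integral_combine[OF d left right] by simp
qed

lemma abs_sin_ramp_integral:
  assumes "\<bar>t\<bar> < pi"
  shows "((\<lambda>a. max 0 (a - pidist t) * (sin a / 2)) has_integral (1 / 2 - \<bar>sin t\<bar> / 2))
           {0..pi / 2}"
  using ramp_sin_weight_integral[of "pidist t"] pidist_bounds[OF assms] sin_pidist[OF assms]
  by simp

text \<open>Integrating the circle overlap bound against \<open>sin a / 2\<close> over \<open>a \<in> [0, \<pi>/2]\<close> gives the
  desired inequality up to an error \<open>O(1/K)\<close>.\<close>
lemma weighted_abs_sin_sum_approx:
  fixes w x :: "'i \<Rightarrow> real"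
  assumes I: "finite I" and w: "\<And>i. i \<in> I \<Longrightarrow> 0 \<le> w i"
    and x: "\<And>i. i \<in> I \<Longrightarrow> 0 \<le> x i \<and> x i < pi" and K: "1 \<le> K"
  shows "(\<Sum>i\<in>I. \<Sum>j\<in>I. w i * w j * \<bar>sin (x i - x j)\<bar>)
       \<le> 2 / pi * (\<Sum>i\<in>I. w i)\<^sup>2 + ((\<Sum>i\<in>I. w i)\<^sup>2 * pi / 8) / real K"
proof -
  define W where "W = (\<Sum>i\<in>I. w i)"
  define X where "X = (\<Sum>i\<in>I. \<Sum>j\<in>I. w i * w j * \<bar>sin (x i - x j)\<bar>)"
  define E where "E = W\<^sup>2 * pi / (8 * real K)"
  define g where "g a = (\<Sum>i\<in>I. \<Sum>j\<in>I. w i * w j * max 0 (a - pidist (x i - x j)))" for a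
  have close: "\<bar>x i - x j\<bar> < pi" if "i \<in> I" "j \<in> I" for i j
    using x[OF that(1)] x[OF that(2)] by linarith
  have "((\<lambda>a. \<Sum>i\<in>I. \<Sum>j\<in>I. w i * w j * (max 0 (a - pidist (x i - x j)) * (sin a / 2)))
          has_integral (\<Sum>i\<in>I. \<Sum>j\<in>I. w i * w j * (1 / 2 - \<bar>sin (x i - x j)\<bar> / 2))) {0..pi / 2}"
    by (intro has_integral_sum I has_integral_mult_right abs_sin_ramp_integral close)
  then have "((\<lambda>a. g a * (sin a / 2))
          has_integral (\<Sum>i\<in>I. \<Sum>j\<in>I. w i * w j * (1 / 2 - \<bar>sin (x i - x j)\<bar> / 2))) {0..pi / 2}"
    by (rule has_integral_eq[rotated]) (simp add: g_def sum_distrib_right mult.assoc)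
  also have "(\<Sum>i\<in>I. \<Sum>j\<in>I. w i * w j * (1 / 2 - \<bar>sin (x i - x j)\<bar> / 2))
           = (\<Sum>i\<in>I. \<Sum>j\<in>I. w i * w j) / 2 - X / 2"
    unfolding X_def by (simp add: right_diff_distrib sum_subtractf sum_divide_distrib)
  also have "(\<Sum>i\<in>I. \<Sum>j\<in>I. w i * w j) = W\<^sup>2"
    by (simp add: W_def power2_eq_square sum_product)
  finally have upper: "((\<lambda>a. g a * (sin a / 2)) has_integral (W\<^sup>2 / 2 - X / 2)) {0..pi / 2}" .
  have lower: "((\<lambda>a. (a\<^sup>2 * (W\<^sup>2 / pi) - E) * (sin a / 2)) has_integral
                 ((pi - 2) / 2 * (W\<^sup>2 / pi) - E * (1 / 2))) {0..pi / 2}"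
    by (rule has_integral_eq[OF _ has_integral_diff[OF
          has_integral_mult_left[OF square_sin_weight_integral]
          has_integral_mult_right[OF sin_weight_integral]]]) (simp add: algebra_simps)
  have "(pi - 2) / 2 * (W\<^sup>2 / pi) - E * (1 / 2) \<le> W\<^sup>2 / 2 - X / 2"
  proof (rule has_integral_le[OF lower upper])
    fix a assume a: "a \<in> {0..pi / 2}"
    have "a\<^sup>2 * W\<^sup>2 / pi - E \<le> g a"
      unfolding g_def W_def E_def by (rule circle_overlap_lower_bound[OF I w x _ _ K]) (use a in auto)
    moreover have "0 \<le> sin a" using a by (intro sin_ge_zero) auto
    ultimately show "(a\<^sup>2 * (W\<^sup>2 / pi) - E) * (sin a / 2) \<le> g a * (sin a / 2)"
      by (intro mult_right_mono) auto
  qed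
  moreover have "(pi - 2) / 2 * (W\<^sup>2 / pi) = W\<^sup>2 / 2 - W\<^sup>2 / pi"
    by (simp add: field_simps)
  ultimately have "X \<le> 2 * (W\<^sup>2 / pi) + E" by linarith
  then show ?thesis
    unfolding X_def W_def E_def by simp
qed

lemma weighted_abs_sin_sum_le:
  fixes w x :: "'i \<Rightarrow> real"
  assumes I: "finite I" and w: "\<And>i. i \<in> I \<Longrightarrow> 0 \<le> w i"
    and x: "\<And>i. i \<in> I \<Longrightarrow> 0 \<le> x i \<and> x i < pi"
  shows "(\<Sum>i\<in>I. \<Sum>j\<in>I. w i * w j * \<bar>sin (x i - x j)\<bar>) \<le> 2 / pi * (\<Sum>i\<in>I. w i)\<^sup>2"
proof -
  define B where "B = 2 / pi * (\<Sum>i\<in>I. w i)\<^sup>2"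
  define C where "C = (\<Sum>i\<in>I. w i)\<^sup>2 * pi / 8"
  have "(\<lambda>K. B + C / real K) \<longlonglongrightarrow> B"
    using tendsto_add[OF tendsto_const lim_const_over_n[of C]] by simp
  moreover have "\<exists>N. \<forall>K\<ge>N. (\<Sum>i\<in>I. \<Sum>j\<in>I. w i * w j * \<bar>sin (x i - x j)\<bar>) \<le> B + C / real K"
    using weighted_abs_sin_sum_approx[of I w x] I w x unfolding B_def C_def by blast
  ultimately show ?thesis
    unfolding B_def by (rule LIMSEQ_le_const)
qed

lemma abs_sin_add_int_pi: "\<bar>sin (t + of_int m * pi)\<bar> = \<bar>sin t\<bar>"
  by (simp add: sin_add abs_mult mult.commute[of _ pi])

lemma Im_cnj_mult: "Im (cnj z * w) = cmod z * cmod w * sin (Arg w - Arg z)"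
proof -
  have "cnj z * w = cnj (rcis (cmod z) (Arg z)) * rcis (cmod w) (Arg w)"
    by (simp add: rcis_cmod_Arg)
  also have "cnj (rcis (cmod z) (Arg z)) = rcis (cmod z) (- Arg z)"
    by (simp add: rcis_def cis_cnj)
  finally show ?thesis by (simp add: rcis_mult)
qed

text \<open>The complex form \<open>\<Sum>\<Sum> \<bar>Im (z\<^sub>i\<^sup>* z\<^sub>j)\<bar> \<le> (2/\<pi>) (\<Sum> \<bar>z\<^sub>i\<bar>)\<^sup>2\<close>: by the two facts
  above the arguments may be reduced into \<open>[0, \<pi>)\<close>.\<close>
lemma abs_Im_cnj_mult_sum_le:
  fixes z :: "'i \<Rightarrow> complex"
  assumes I: "finite I"
  shows "(\<Sum>i\<in>I. \<Sum>j\<in>I. \<bar>Im (cnj (z i) * z j)\<bar>) \<le> 2 / pi * (\<Sum>i\<in>I. cmod (z i))\<^sup>2"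
proof -
  define m where "m i = \<lfloor>Arg (z i) / pi\<rfloor>" for i
  define x where "x i = Arg (z i) - of_int (m i) * pi" for i
  have x_range: "0 \<le> x i \<and> x i < pi" for i
  proof -
    have "of_int (m i) \<le> Arg (z i) / pi" "Arg (z i) / pi < of_int (m i) + 1"
      unfolding m_def by linarith+
    then show ?thesis
      unfolding x_def by (simp add: field_simps)
  qed
  have "\<bar>Im (cnj (z i) * z j)\<bar> = cmod (z i) * cmod (z j) * \<bar>sin (x i - x j)\<bar>" for i j
  proof -
    have "Arg (z j) - Arg (z i) = (x j - x i) + of_int (m j - m i) * pi"
      by (simp add: x_def algebra_simps)
    then have "\<bar>sin (Arg (z j) - Arg (z i))\<bar> = \<bar>sin (x j - x i)\<bar>"
      by (simp only: abs_sin_add_int_pi)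
    also have "\<dots> = \<bar>sin (x i - x j)\<bar>"
      by (metis abs_minus_cancel minus_diff_eq sin_minus)
    finally have sin_eq: "\<bar>sin (Arg (z j) - Arg (z i))\<bar> = \<bar>sin (x i - x j)\<bar>" .
    have "\<bar>Im (cnj (z i) * z j)\<bar> = \<bar>cmod (z i) * cmod (z j) * sin (Arg (z j) - Arg (z i))\<bar>"
      by (simp only: Im_cnj_mult)
    then show ?thesis using sin_eq by (simp add: abs_mult)
  qed
  then have "(\<Sum>i\<in>I. \<Sum>j\<in>I. \<bar>Im (cnj (z i) * z j)\<bar>)
           = (\<Sum>i\<in>I. \<Sum>j\<in>I. cmod (z i) * cmod (z j) * \<bar>sin (x i - x j)\<bar>)" by simp
  also have "\<dots> \<le> 2 / pi * (\<Sum>i\<in>I. cmod (z i))\<^sup>2"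
    by (rule weighted_abs_sin_sum_le[OF I]) (use x_range in auto)
  finally show ?thesis .
qed

section \<open>Upper bound: \<open>Im \<lambda> \<le> 1/\<pi>\<close>\<close>

lemma Im_eigenvalue_quadratic_form:
  assumes A: "A \<in> carrier_mat n n" and v: "v \<in> carrier_vec n"
    and eig: "map_mat complex_of_real A *\<^sub>v v = k \<cdot>\<^sub>v v"
  shows "(\<Sum>i<n. \<Sum>j<n. A $$ (i, j) * Im (cnj (v $ i) * v $ j)) = Im k * (\<Sum>i<n. (cmod (v $ i))\<^sup>2)"
proof -
  have row: "(\<Sum>j<n. complex_of_real (A $$ (i, j)) * v $ j) = k * v $ i" if i: "i < n" for i
  proof -
    have "(map_mat complex_of_real A *\<^sub>v v) $ i = k * v $ i" using eig v i by simp
    then show ?thesis using A v i by (simp add: scalar_prod_def lessThan_atLeast0)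
  qed
  have "(\<Sum>i<n. \<Sum>j<n. complex_of_real (A $$ (i, j)) * (cnj (v $ i) * v $ j))
      = (\<Sum>i<n. cnj (v $ i) * (\<Sum>j<n. complex_of_real (A $$ (i, j)) * v $ j))"
    by (simp add: sum_distrib_left mult_ac)
  also have "\<dots> = (\<Sum>i<n. cnj (v $ i) * (k * v $ i))"
    by (intro sum.cong refl) (simp add: row)
  also have "\<dots> = (\<Sum>i<n. k * complex_of_real ((cmod (v $ i))\<^sup>2))"
    by (intro sum.cong refl) (simp only: complex_norm_square, simp add: mult_ac)
  finally have "Im (\<Sum>i<n. \<Sum>j<n. complex_of_real (A $$ (i, j)) * (cnj (v $ i) * v $ j))
              = Im (\<Sum>i<n. k * complex_of_real ((cmod (v $ i))\<^sup>2))" by simp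
  then show ?thesis by (simp add: sum_distrib_left)
qed

text \<open>If \<open>y\<close> is antisymmetric and the coefficients off the diagonal lie in \<open>[-b, 0]\<close>, then
  \<open>\<Sum>\<Sum> A\<^sub>i\<^sub>j y\<^sub>i\<^sub>j \<le> (b/2) \<Sum>\<Sum> \<bar>y\<^sub>i\<^sub>j\<bar>\<close>: each term is at most \<open>b (\<bar>y\<^sub>i\<^sub>j\<bar> - y\<^sub>i\<^sub>j)/2\<close>, and
  the \<open>y\<^sub>i\<^sub>j\<close> sum to zero.\<close>
lemma antisymmetric_form_le:
  fixes A y :: "nat \<Rightarrow> nat \<Rightarrow> real"
  assumes anti: "\<And>i j. y j i = - y i j"
    and coef: "\<And>i j. i < n \<Longrightarrow> j < n \<Longrightarrow> i \<noteq> j \<Longrightarrow> A i j \<le> 0 \<and> - A i j \<le> b"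
  shows "(\<Sum>i<n. \<Sum>j<n. A i j * y i j) \<le> b / 2 * (\<Sum>i<n. \<Sum>j<n. \<bar>y i j\<bar>)"
proof -
  have diag: "y i i = 0" for i using anti[of i i] by simp
  have term_le: "A i j * y i j \<le> b / 2 * \<bar>y i j\<bar> - b / 2 * y i j" if "i < n" "j < n" for i j
  proof (cases "i = j")
    case False
    with coef[OF that] have A: "A i j \<le> 0" "- A i j \<le> b" by auto
    show ?thesis
    proof (cases "0 \<le> y i j")
      case True
      then show ?thesis using A by (simp add: mult_nonpos_nonneg)
    next
      case False
      then have "(- A i j) * (- y i j) \<le> b * (- y i j)" using A by (intro mult_right_mono) auto
      then show ?thesis using False by simp
    qed
  qed (simp add: diag)
  have "(\<Sum>i<n. \<Sum>j<n. y i j) = (\<Sum>j<n. \<Sum>i<n. y i j)" by (rule sum.swap)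
  also have "\<dots> = (\<Sum>j<n. \<Sum>i<n. - y j i)" by (intro sum.cong refl) (rule anti)
  also have "\<dots> = - (\<Sum>j<n. \<Sum>i<n. y j i)" by (simp add: sum_negf)
  finally have sum_zero: "(\<Sum>i<n. \<Sum>j<n. y i j) = 0" by simp
  have "(\<Sum>i<n. \<Sum>j<n. A i j * y i j) \<le> (\<Sum>i<n. \<Sum>j<n. b / 2 * \<bar>y i j\<bar> - b / 2 * y i j)"
    by (intro sum_mono term_le) auto
  also have "\<dots> = b / 2 * (\<Sum>i<n. \<Sum>j<n. \<bar>y i j\<bar>) - b / 2 * (\<Sum>i<n. \<Sum>j<n. y i j)"
    by (simp add: sum_subtractf sum_distrib_left)
  finally show ?thesis by (simp add: sum_zero)
qed

text \<open>Every eigenvalue of a standardized Laplacian has imaginary part at most \<open>1/\<pi>\<close>: combine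
  the quadratic form, the antisymmetry bound with \<open>b = 1/n\<close>, the \<open>\<bar>sin\<bar>\<close> inequality, and
  Cauchy-Schwarz \<open>(\<Sum> \<bar>v\<^sub>i\<bar>)\<^sup>2 \<le> n \<parallel>v\<parallel>\<^sup>2\<close>.\<close>
theorem Im_eigenvalue_le:
  assumes L: "standardized_laplacian n A" and ev: "eigenvalue (map_mat complex_of_real A) k"
  shows "Im k \<le> 1 / pi"
proof -
  have A: "A \<in> carrier_mat n n"
    and off: "\<And>i j. i < n \<Longrightarrow> j < n \<Longrightarrow> i \<noteq> j \<Longrightarrow> A $$ (i, j) \<le> 0 \<and> \<bar>A $$ (i, j)\<bar> \<le> 1 / real n"
    using L unfolding standardized_laplacian_def by blast+
  obtain v where v: "v \<in> carrier_vec n" "v \<noteq> 0\<^sub>v n" "map_mat complex_of_real A *\<^sub>v v = k \<cdot>\<^sub>v v"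
    using ev A unfolding eigenvalue_def eigenvector_def by auto
  define S where "S = (\<Sum>i<n. (cmod (v $ i))\<^sup>2)"
  define Y where "Y = (\<Sum>i<n. \<Sum>j<n. \<bar>Im (cnj (v $ i) * v $ j)\<bar>)"
  obtain i0 where i0: "i0 < n" "v $ i0 \<noteq> 0"
    using v(1,2) by (metis carrier_vecD eq_vecI index_zero_vec(1,2))
  have n: "0 < n" using i0 by simp
  have S_pos: "0 < S"
    unfolding S_def using i0 by (intro sum_pos2[of _ i0]) auto
  have Im_le: "Im k * S \<le> 1 / real n / 2 * Y"
    unfolding S_def Y_def Im_eigenvalue_quadratic_form[OF A v(1,3), symmetric]
    by (rule antisymmetric_form_le) (auto simp: algebra_simps dest: off)
  have Y_le: "Y \<le> 2 / pi * (S * real n)"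
  proof -
    have "Y \<le> 2 / pi * (\<Sum>i<n. cmod (v $ i))\<^sup>2"
      unfolding Y_def by (rule abs_Im_cnj_mult_sum_le) simp
    moreover have "(\<Sum>i<n. cmod (v $ i))\<^sup>2 \<le> S * real n"
      unfolding S_def using sum_squared_le_sum_of_squares[of "\<lambda>i. cmod (v $ i)" "{..<n}"] by simp
    ultimately show ?thesis
      by (meson order_trans mult_left_mono divide_nonneg_nonneg pi_ge_zero zero_le_numeral)
  qed
  have "1 / real n / 2 * Y \<le> 1 / real n / 2 * (2 / pi * (S * real n))"
    using Y_le by (intro mult_left_mono) auto
  also have "\<dots> = S / pi" using n by (simp add: field_simps)
  finally have "Im k * S \<le> S / pi" using Im_le by linarith
  then show ?thesis using S_pos by (simp add: field_simps)
qed

section \<open>Lower bound: an explicit circulant Laplacian\<close>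

definition unit_root :: "nat \<Rightarrow> nat \<Rightarrow> complex" where
  "unit_root n m = cis (- (2 * pi * real m / real n))"

lemma unit_root_add: "unit_root n a * unit_root n b = unit_root n (a + b)"
  by (simp add: unit_root_def cis_mult algebra_simps add_divide_distrib)

lemma unit_root_mod:
  assumes "0 < n"
  shows "unit_root n (a mod n) = unit_root n a"
proof -
  have "real a = real (a mod n) + real n * real (a div n)"
    by (metis div_mult_mod_eq of_nat_add of_nat_mult mult.commute add.commute)
  then have "- (2 * pi * real a / real n)
           = - (2 * pi * real (a mod n) / real n) + 2 * pi * real_of_int (- int (a div n))"
    using assms by (simp add: field_simps)
  then have "unit_root n a = unit_root n (a mod n) * cis (2 * pi * real_of_int (- int (a div n)))"
    by (simp add: unit_root_def cis_mult)
  also have "cis (2 * pi * real_of_int (- int (a div n))) = 1"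
    by (rule cis_multiple_2pi) simp
  finally show ?thesis by simp
qed

definition cdiff :: "nat \<Rightarrow> nat \<Rightarrow> nat \<Rightarrow> nat" where
  "cdiff n i j = (n + j - i) mod n"

lemma cdiff_inverse:
  assumes "i < n" "j < n"
  shows "(i + cdiff n i j) mod n = j"
proof -
  have "(i + cdiff n i j) mod n = (i + (n + j - i)) mod n"
    unfolding cdiff_def by (simp add: mod_add_right_eq)
  also have "i + (n + j - i) = j + n * 1" using assms by simp
  finally show ?thesis using assms by simp
qed

lemma cdiff_add_mod:
  assumes "i < n" "m < n"
  shows "cdiff n i ((i + m) mod n) = m"
proof (cases "i + m < n")
  case False
  then have "(i + m) mod n = i + m - n" using assms by (simp add: mod_if)
  then show ?thesis unfolding cdiff_def using assms False by simp
qed (use assms in \<open>simp add: cdiff_def\<close>)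

lemma cdiff_eq_0_iff:
  assumes "i < n" "j < n"
  shows "cdiff n i j = 0 \<longleftrightarrow> i = j"
  using cdiff_inverse[OF assms] assms by (auto simp: cdiff_def)

lemma sum_cdiff:
  assumes "i < n"
  shows "(\<Sum>j<n. g (cdiff n i j) j) = (\<Sum>m<n. g m ((i + m) mod n))"
  by (rule sum.reindex_bij_witness[where i = "\<lambda>m. (i + m) mod n" and j = "cdiff n i"])
     (use assms cdiff_inverse cdiff_add_mod in \<open>auto simp: cdiff_def\<close>)

definition circ_coeff :: "nat \<Rightarrow> nat \<Rightarrow> real" where
  "circ_coeff n m = (if m = 0 then real ((n - 1) div 2) / real n else 0)
             - (if 1 \<le> m \<and> m \<le> (n - 1) div 2 then 1 / real n else 0)"

definition circulant :: "nat \<Rightarrow> real mat" where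
  "circulant n = Matrix.mat n n (\<lambda>(i, j). circ_coeff n (cdiff n i j))"

lemma sum_circ_coeff:
  assumes "0 < n"
  shows "(\<Sum>m<n. circ_coeff n m) = 0"
proof -
  define k where "k = (n - 1) div 2"
  have k: "k < n" using assms unfolding k_def by auto
  have "(\<Sum>m<n. (if 1 \<le> m \<and> m \<le> k then 1 / real n else 0)) = (\<Sum>m\<in>{1..k}. 1 / real n)"
    by (rule sum.mono_neutral_cong_right) (use k in auto)
  then show ?thesis
    using assms unfolding circ_coeff_def k_def[symmetric] by (simp add: sum_subtractf)
qed

lemma circulant_standardized_laplacian:
  assumes "0 < n"
  shows "standardized_laplacian n (circulant n)"
  unfolding standardized_laplacian_def
proof (intro conjI allI impI)
  fix i assume i: "i < n"
  have "(\<Sum>j<n. circulant n $$ (i, j)) = (\<Sum>j<n. circ_coeff n (cdiff n i j))"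
    by (simp add: circulant_def i)
  also have "\<dots> = 0"
    using sum_cdiff[OF i, of "\<lambda>m j. circ_coeff n m"] sum_circ_coeff[OF assms] by simp
  finally show "(\<Sum>j<n. circulant n $$ (i, j)) = 0" .
next
  fix i j assume "i < n" "j < n" "i \<noteq> j"
  then have "cdiff n i j \<noteq> 0" "i < n" "j < n" using cdiff_eq_0_iff by auto
  then show "circulant n $$ (i, j) \<le> 0" "\<bar>circulant n $$ (i, j)\<bar> \<le> 1 / real n"
    by (simp_all add: circulant_def circ_coeff_def)
qed (simp add: circulant_def)

text \<open>The Fourier vector \<open>(\<omega>\<^sup>j)\<^sub>j\<close> is an eigenvector of the circulant matrix.\<close>
definition circulant_eigenvalue :: "nat \<Rightarrow> complex" where
  "circulant_eigenvalue n = (\<Sum>m<n. complex_of_real (circ_coeff n m) * unit_root n m)"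

lemma eigenvalue_circulant:
  assumes n: "0 < n"
  shows "eigenvalue (map_mat complex_of_real (circulant n)) (circulant_eigenvalue n)"
proof -
  define v where "v = Matrix.vec n (unit_root n)"
  have "map_mat complex_of_real (circulant n) *\<^sub>v v = circulant_eigenvalue n \<cdot>\<^sub>v v"
  proof (rule eq_vecI)
    fix i assume "i < dim_vec (circulant_eigenvalue n \<cdot>\<^sub>v v)"
    then have i: "i < n" by (simp add: v_def)
    have "(map_mat complex_of_real (circulant n) *\<^sub>v v) $ i
        = (\<Sum>j<n. complex_of_real (circ_coeff n (cdiff n i j)) * unit_root n j)"
      using i by (simp add: circulant_def v_def scalar_prod_def lessThan_atLeast0)
    also have "\<dots> = (\<Sum>m<n. complex_of_real (circ_coeff n m) * unit_root n ((i + m) mod n))"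
      by (rule sum_cdiff[OF i])
    also have "\<dots> = (\<Sum>m<n. unit_root n i * (complex_of_real (circ_coeff n m) * unit_root n m))"
      by (intro sum.cong refl) (simp add: unit_root_mod[OF n] unit_root_add[symmetric] mult_ac)
    finally show "(map_mat complex_of_real (circulant n) *\<^sub>v v) $ i
                = (circulant_eigenvalue n \<cdot>\<^sub>v v) $ i"
      using i by (simp add: circulant_eigenvalue_def v_def sum_distrib_left mult_ac)
  qed (simp add: circulant_def v_def)
  moreover have "v \<noteq> 0\<^sub>v n"
    using n by (auto simp: v_def unit_root_def dest!: arg_cong[where f = "\<lambda>u. u $ 0"])
  ultimately show ?thesis
    unfolding eigenvalue_def eigenvector_def
    by (intro exI[of _ v]) (simp add: circulant_def v_def)
qed

lemma sin_sum_telescope: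
  "(\<Sum>m\<in>{1..K::nat}. sin (real m * t)) * (2 * sin (t / 2)) = cos (t / 2) - cos ((real K + 1 / 2) * t)"
proof (induction K)
  case (Suc K)
  have "2 * sin ((real K + 1) * t) * sin (t / 2)
      = cos ((real K + 1) * t - t / 2) - cos ((real K + 1) * t + t / 2)"
    by (simp add: cos_diff cos_add)
  also have "\<dots> = cos ((real K + 1 / 2) * t) - cos ((real K + 3 / 2) * t)"
    by (simp add: algebra_simps)
  finally show ?case using Suc by (simp add: algebra_simps)
qed simp

text \<open>\<open>Im \<lambda> = (1/n) \<Sum>\<^sub>m\<^sub>=\<^sub>1\<^sup>k sin (2\<pi>m/n) \<ge> cot (\<pi>/n) / n\<close>, by telescoping and
  \<open>cos ((2k + 1) \<pi>/n) \<le> cos (\<pi> - \<pi>/n)\<close> since \<open>n - 1 \<le> 2k + 1 \<le> n\<close>.\<close>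
lemma Im_circulant_eigenvalue:
  assumes "3 \<le> n"
  shows "cos (pi / real n) / (real n * sin (pi / real n)) \<le> Im (circulant_eigenvalue n)"
proof -
  define k where "k = (n - 1) div 2"
  define t where "t = 2 * pi / real n"
  have n: "0 < real n" using assms by simp
  have k: "1 \<le> k" "k < n" "real n - 1 \<le> 2 * real k + 1" "2 * real k + 1 \<le> real n"
    using assms unfolding k_def by linarith+
  have "Im (circulant_eigenvalue n) = (\<Sum>m<n. circ_coeff n m * (- sin (2 * pi * real m / real n)))"
    by (simp add: circulant_eigenvalue_def unit_root_def)
  also have "\<dots> = (\<Sum>m<n. if 1 \<le> m \<and> m \<le> k then sin (real m * t) / real n else 0)"
    by (intro sum.cong refl) (auto simp: circ_coeff_def k_def t_def mult_ac)
  also have "\<dots> = (\<Sum>m\<in>{1..k}. sin (real m * t)) / real n"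
    by (subst sum.mono_neutral_cong_left[symmetric, where S = "{1..k}"])
       (use k in \<open>auto simp: sum_divide_distrib\<close>)
  finally have Im_eq: "Im (circulant_eigenvalue n) = (\<Sum>m\<in>{1..k}. sin (real m * t)) / real n" .
  have "cos ((real k + 1 / 2) * t) \<le> cos (pi - pi / real n)"
  proof (rule cos_monotone_0_pi_le)
    have "(real n - 1) * (pi / real n) \<le> (2 * real k + 1) * (pi / real n)"
      using k by (intro mult_right_mono) auto
    then show "pi - pi / real n \<le> (real k + 1 / 2) * t"
      using n by (simp add: t_def field_simps)
    have "(2 * real k + 1) * (pi / real n) \<le> real n * (pi / real n)"
      using k by (intro mult_right_mono) auto
    then show "(real k + 1 / 2) * t \<le> pi" using n by (simp add: t_def field_simps)
    show "0 \<le> pi - pi / real n" using assms by (simp add: field_simps)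
  qed
  then have "2 * cos (pi / real n) \<le> (\<Sum>m\<in>{1..k}. sin (real m * t)) * (2 * sin (pi / real n))"
    using sin_sum_telescope[where K = k and t = t] by (simp add: t_def)
  moreover have "0 < sin (pi / real n)"
    using assms by (intro sin_gt_zero) (auto simp: field_simps)
  ultimately show ?thesis
    unfolding Im_eq using n by (simp add: field_simps)
qed

section \<open>The limit\<close>

lemma h_bounds:
  assumes "3 \<le> n"
  shows "cos (pi / real n) / (real n * sin (pi / real n)) \<le> h n" and "h n \<le> 1 / pi"
proof -
  define T where "T = {Im k | k A. standardized_laplacian n A \<and> eigenvalue (map_mat complex_of_real A) k}"
  have T_le: "t \<le> 1 / pi" if "t \<in> T" for t
    using that Im_eigenvalue_le unfolding T_def by blast
  have circ: "Im (circulant_eigenvalue n) \<in> T"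
    unfolding T_def using circulant_standardized_laplacian[of n] eigenvalue_circulant[of n] assms by auto
  have "Im (circulant_eigenvalue n) \<le> Sup T"
    using circ T_le by (intro cSup_upper) (auto simp: bdd_above_def)
  then show "cos (pi / real n) / (real n * sin (pi / real n)) \<le> h n"
    using Im_circulant_eigenvalue[OF assms] unfolding h_def T_def[symmetric] by linarith
  show "h n \<le> 1 / pi"
    unfolding h_def T_def[symmetric] using circ T_le by (intro cSup_least) auto
qed

theorem mainTheorem20:
  shows "h \<longlonglongrightarrow> 1 / pi"
proof (rule tendsto_sandwich)
  show "(\<lambda>n. cos (pi / real n) / (real n * sin (pi / real n))) \<longlonglongrightarrow> 1 / pi"
  proof -
    have "(\<lambda>n. cos (pi / real n) / (real n * sin (pi / real n))) \<longlonglongrightarrow> inverse pi"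
      by real_asymp
    then show ?thesis by (simp add: inverse_eq_divide)
  qed
  show "\<forall>\<^sub>F n in sequentially. cos (pi / real n) / (real n * sin (pi / real n)) \<le> h n"
    by (rule eventually_sequentiallyI[of 3]) (rule h_bounds(1))
  show "\<forall>\<^sub>F n in sequentially. h n \<le> 1 / pi"
    by (rule eventually_sequentiallyI[of 3]) (rule h_bounds(2))
qed simp

end
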